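(* For every $a>0$, one has $$\sqrt{\mathbf{\Gamma}_a}+\sqrt{\mathbf{\Gamma}_a}\;\stackrel{d}{=}\;\sqrt{\mathbf{\Gamma}_{2a}\times\left(1+\sqrt{\mathbf{B}_{a,1/2}}\right)},$$ where all random variables appearing on the same side of the identity are independent.
   Context: For $t>0$, $\mathbf{\Gamma}_t$ denotes a gamma random variable with density $\frac{1}{\Gamma(t)}x^{t-1}e^{-x}$ on $(0,\infty)$; for $p,q>0$, $\mathbf{B}_{p,q}$ denotes a beta random variable with density $\frac{\Gamma(p+q)}{\Gamma(p)\Gamma(q)}x^{p-1}(1-x)^{q-1}$ on $(0,1)$. $\stackrel{d}{=}$ denotes equality in distribution. *)

theory Defs
  imports "HOL-Probability.Probability"
begin

definition gamma_density :: "real \<Rightarrow> real \<Rightarrow> real" where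
  "gamma_density t x = (if 0 < x then x powr (t - 1) * exp (- x) / Gamma t else 0)"

definition beta_density :: "real \<Rightarrow> real \<Rightarrow> real \<Rightarrow> real" where
  "beta_density p q x = (if 0 < x \<and> x < 1
     then Gamma (p + q) / (Gamma p * Gamma q) * x powr (p - 1) * (1 - x) powr (q - 1) else 0)"

end

theory Submission
  imports Defs
begin

(* Put S = X1 + X2 and T = X1 / S. By the beta-gamma algebra, S and T are independent with
   S ~ Gamma(2a) and T ~ Beta(a, a), and (sqrt X1 + sqrt X2)^2 = S (1 + sqrt (4 T (1 - T))).
   The Beta(a, a) density is symmetric about 1/2, and the substitution r = 4 t (1 - t) on (0, 1/2)
   shows 4 T (1 - T) ~ Beta(a, 1/2); the normalising constants agree by Legendre's duplication
   formula. *)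

lemma nn_integral_indicator_incseq_LIMSEQ:
  fixes f :: "'a \<Rightarrow> real"
  assumes "incseq S" and [measurable]: "\<And>n. S n \<in> sets M" "f \<in> borel_measurable M"
  shows "(\<lambda>n. \<integral>\<^sup>+x. ennreal (f x * indicator (S n) x) \<partial>M)
           \<longlonglongrightarrow> (\<integral>\<^sup>+x. ennreal (f x * indicator (\<Union>n. S n) x) \<partial>M)"
proof (rule nn_integral_LIMSEQ)
  show "incseq (\<lambda>n x. ennreal (f x * indicator (S n) x))"
    using \<open>incseq S\<close> by (auto simp: incseq_def le_fun_def subset_eq split: split_indicator)
  show "(\<lambda>n. ennreal (f x * indicator (S n) x)) \<longlonglongrightarrow> ennreal (f x * indicator (\<Union>n. S n) x)" for x
    by (intro tendsto_ennrealI tendsto_mult_left LIMSEQ_indicator_incseq \<open>incseq S\<close>)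
qed measurable

lemma image_atLeastAtMost_deriv_nonneg:
  fixes g g' :: "real \<Rightarrow> real"
  assumes "l \<le> u"
    and deriv_g: "\<And>x. x \<in> {l..u} \<Longrightarrow> (g has_real_derivative g' x) (at x)"
    and g'_nonneg: "\<And>x. x \<in> {l..u} \<Longrightarrow> 0 \<le> g' x"
  shows "g ` {l..u} = {g l..g u}"
proof
  have mono_g: "g x \<le> g y" if "l \<le> x" "x \<le> y" "y \<le> u" for x y
    using that by (intro deriv_nonneg_imp_mono[of x y g g']) (auto intro: deriv_g g'_nonneg)
  then show "g ` {l..u} \<subseteq> {g l..g u}"
    using \<open>l \<le> u\<close> by auto
  have "continuous_on {l..u} g"
    using deriv_g by (meson DERIV_isCont continuous_at_imp_continuous_on)
  then show "{g l..g u} \<subseteq> g ` {l..u}"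
    using IVT'[of g l _ u] \<open>l \<le> u\<close> by (force simp: image_iff)
qed

lemma nn_integral_substitution_einterval:
  fixes f g g' :: "real \<Rightarrow> real" and a b :: ereal
  assumes "a < b"
    and [measurable]: "f \<in> borel_measurable borel" "g \<in> borel_measurable borel"
      "g' \<in> borel_measurable borel"
    and deriv_g: "\<And>x. x \<in> einterval a b \<Longrightarrow> (g has_real_derivative g' x) (at x)"
    and contg': "continuous_on (einterval a b) g'"
    and g'_nonneg: "\<And>x. x \<in> einterval a b \<Longrightarrow> 0 \<le> g' x"
  shows "(\<integral>\<^sup>+y. ennreal (f y * indicator (g ` einterval a b) y) \<partial>lborel)
       = (\<integral>\<^sup>+x. ennreal (f (g x) * g' x * indicator (einterval a b) x) \<partial>lborel)"
proof -
  obtain u l :: "nat \<Rightarrow> real" where I: "einterval a b = (\<Union>n. {l n..u n})"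
    and "incseq u" "decseq l" and lu: "\<And>n. l n < u n"
    by (rule einterval_Icc_approximation[OF \<open>a < b\<close>]) blast
  have sub: "{l n..u n} \<subseteq> einterval a b" for n
    unfolding I by blast
  have image_g: "g ` {l n..u n} = {g (l n)..g (u n)}" for n
    using sub[of n] lu[of n]
    by (intro image_atLeastAtMost_deriv_nonneg) (auto intro: deriv_g g'_nonneg)
  have inc_I: "incseq (\<lambda>n. {l n..u n})"
    using \<open>incseq u\<close> \<open>decseq l\<close> by (force simp: incseq_def decseq_def)
  then have inc_gI: "incseq (\<lambda>n. {g (l n)..g (u n)})"
    by (simp add: incseq_def image_mono flip: image_g)
  have "(\<lambda>n. \<integral>\<^sup>+y. ennreal (f y * indicator {g (l n)..g (u n)} y) \<partial>lborel)
          \<longlonglongrightarrow> (\<integral>\<^sup>+y. ennreal (f y * indicator (g ` einterval a b) y) \<partial>lborel)"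
    using nn_integral_indicator_incseq_LIMSEQ[OF inc_gI] by (simp add: I image_UN image_g)
  moreover have "(\<lambda>n. \<integral>\<^sup>+x. ennreal (f (g x) * g' x * indicator {l n..u n} x) \<partial>lborel)
          \<longlonglongrightarrow> (\<integral>\<^sup>+x. ennreal (f (g x) * g' x * indicator (einterval a b) x) \<partial>lborel)"
    using nn_integral_indicator_incseq_LIMSEQ[OF inc_I, of lborel "\<lambda>x. f (g x) * g' x"]
    by (simp add: I)
  moreover have "(\<integral>\<^sup>+y. ennreal (f y * indicator {g (l n)..g (u n)} y) \<partial>lborel)
      = (\<integral>\<^sup>+x. ennreal (f (g x) * g' x * indicator {l n..u n} x) \<partial>lborel)" for n
    using sub[of n] lu[of n]
    by (intro nn_integral_substitution)
       (auto simp: set_borel_measurable_def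
             intro: deriv_g g'_nonneg continuous_on_subset[OF contg'] less_imp_le)
  ultimately show ?thesis
    by (simp add: LIMSEQ_unique)
qed

lemma nn_integral_reflection_symmetric:
  fixes f :: "real \<Rightarrow> real"
  assumes [measurable]: "f \<in> borel_measurable borel" and sym: "\<And>t. f (c - t) = f t"
  shows "(\<integral>\<^sup>+t. ennreal (f t) \<partial>lborel) = 2 * (\<integral>\<^sup>+t. ennreal (f t * indicator {..<c/2} t) \<partial>lborel)"
proof -
  have "(\<integral>\<^sup>+t. ennreal (f t * indicator {c/2..} t) \<partial>lborel)
      = (\<integral>\<^sup>+t. ennreal (f (c - t) * indicator {c/2..} (c - t)) \<partial>lborel)"
    using nn_integral_real_affine[of "\<lambda>t. ennreal (f t * indicator {c/2..} t)" "-1" c] by simp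
  also have "\<dots> = (\<integral>\<^sup>+t. ennreal (f t * indicator {..<c/2} t) \<partial>lborel)"
    by (rule nn_integral_cong_AE)
       (use AE_lborel_singleton[of "c/2"] in \<open>auto simp: sym indicator_def\<close>)
  finally have upper: "(\<integral>\<^sup>+t. ennreal (f t * indicator {c/2..} t) \<partial>lborel)
      = (\<integral>\<^sup>+t. ennreal (f t * indicator {..<c/2} t) \<partial>lborel)" .
  have "(\<integral>\<^sup>+t. ennreal (f t) \<partial>lborel)
      = (\<integral>\<^sup>+t. ennreal (f t * indicator {..<c/2} t) + ennreal (f t * indicator {c/2..} t) \<partial>lborel)"
    by (intro nn_integral_cong) (auto split: split_indicator)
  also have "\<dots> = (\<integral>\<^sup>+t. ennreal (f t * indicator {..<c/2} t) \<partial>lborel)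
      + (\<integral>\<^sup>+t. ennreal (f t * indicator {c/2..} t) \<partial>lborel)"
    by (rule nn_integral_add) auto
  finally show ?thesis
    unfolding upper by (simp add: mult_2)
qed

lemma gamma_density_nonneg: "0 < t \<Longrightarrow> 0 \<le> gamma_density t x"
  by (simp add: gamma_density_def)

lemma beta_density_nonneg: "0 < p \<Longrightarrow> 0 < q \<Longrightarrow> 0 \<le> beta_density p q x"
  by (simp add: beta_density_def)

lemma borel_measurable_gamma_density[measurable]: "gamma_density t \<in> borel_measurable borel"
  unfolding gamma_density_def[abs_def] by measurable

lemma borel_measurable_beta_density[measurable]: "beta_density p q \<in> borel_measurable borel"
  unfolding beta_density_def[abs_def] by measurable

lemma gamma_density_pair_factorization:
  assumes "0 < a" "0 < b" "0 < s"
  shows "s * gamma_density a (s * t) * gamma_density b (s - s * t)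
       = gamma_density (a + b) s * beta_density a b t"
proof (cases "0 < t \<and> t < 1")
  case True
  then have pos: "0 < s * t" "0 < s - s * t" "0 < 1 - t"
    using assms by (auto simp: algebra_simps)
  have "s powr (a + b - 1) = s powr (1 + (a - 1) + (b - 1))"
    by (simp add: algebra_simps)
  also have "\<dots> = s * s powr (a - 1) * s powr (b - 1)"
    using \<open>0 < s\<close> by (simp only: powr_add powr_one)
  finally have s_powr: "s powr (a + b - 1) = s * s powr (a - 1) * s powr (b - 1)" .
  have "s - s * t = s * (1 - t)"
    by (simp add: algebra_simps)
  then have powers: "s * (s * t) powr (a - 1) * (s - s * t) powr (b - 1)
      = s powr (a + b - 1) * (t powr (a - 1) * (1 - t) powr (b - 1))"
    using pos assms by (simp add: s_powr powr_mult mult_ac)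
  have "s * gamma_density a (s * t) * gamma_density b (s - s * t)
      = (s * (s * t) powr (a - 1) * (s - s * t) powr (b - 1))
        * (exp (- (s * t)) * exp (- (s - s * t))) / (Gamma a * Gamma b)"
    using pos by (simp add: gamma_density_def)
  also have "\<dots> = s powr (a + b - 1) * exp (- s) / Gamma (a + b)
      * (Gamma (a + b) / (Gamma a * Gamma b) * (t powr (a - 1) * (1 - t) powr (b - 1)))"
    using assms by (simp add: powers less_imp_neq[symmetric] flip: exp_add)
  also have "\<dots> = gamma_density (a + b) s * beta_density a b t"
    using assms True by (simp add: gamma_density_def beta_density_def mult.assoc)
  finally show ?thesis .
next
  case False
  then have "s * t \<le> 0 \<or> s - s * t \<le> 0"
    using assms by (auto simp: not_less mult_le_cancel_left1 mult_le_0_iff)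
  then show ?thesis
    using False by (auto simp: gamma_density_def beta_density_def)
qed

lemma nn_integral_gamma_pair_eq_gamma_beta:
  fixes a b :: real and F :: "real \<Rightarrow> real \<Rightarrow> real"
  assumes "0 < a" "0 < b"
    and [measurable]: "(\<lambda>(s, t). F s t) \<in> borel_measurable (borel \<Otimes>\<^sub>M borel)"
  shows "(\<integral>\<^sup>+x. \<integral>\<^sup>+y. ennreal (gamma_density a x * gamma_density b y * F (x + y) (x / (x + y)))
            \<partial>lborel \<partial>lborel)
       = (\<integral>\<^sup>+s. \<integral>\<^sup>+t. ennreal (gamma_density (a + b) s * beta_density a b t * F s t)
            \<partial>lborel \<partial>lborel)"
proof -
  have translate:
    "(\<integral>\<^sup>+y. ennreal (gamma_density a x * gamma_density b y * F (x + y) (x / (x + y))) \<partial>lborel)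
      = (\<integral>\<^sup>+s. ennreal (gamma_density a x * gamma_density b (s - x) * F s (x / s)) \<partial>lborel)" for x
    by (subst nn_integral_real_affine[where c = 1 and t = "- x"]) auto
  have "(\<integral>\<^sup>+x. \<integral>\<^sup>+y. ennreal (gamma_density a x * gamma_density b y * F (x + y) (x / (x + y)))
          \<partial>lborel \<partial>lborel)
      = (\<integral>\<^sup>+x. \<integral>\<^sup>+s. ennreal (gamma_density a x * gamma_density b (s - x) * F s (x / s))
          \<partial>lborel \<partial>lborel)"
    by (simp only: translate)
  also have "\<dots> = (\<integral>\<^sup>+s. \<integral>\<^sup>+x. ennreal (gamma_density a x * gamma_density b (s - x) * F s (x / s))
                     \<partial>lborel \<partial>lborel)"
    by (rule lborel_pair.Fubini'[symmetric]) measurable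
  also have "\<dots> = (\<integral>\<^sup>+s. \<integral>\<^sup>+t. ennreal (gamma_density (a + b) s * beta_density a b t * F s t)
                     \<partial>lborel \<partial>lborel)"
  proof (rule nn_integral_cong)
    fix s :: real
    show "(\<integral>\<^sup>+x. ennreal (gamma_density a x * gamma_density b (s - x) * F s (x / s)) \<partial>lborel)
        = (\<integral>\<^sup>+t. ennreal (gamma_density (a + b) s * beta_density a b t * F s t) \<partial>lborel)"
    proof (cases "0 < s")
      case True
      have "(\<integral>\<^sup>+x. ennreal (gamma_density a x * gamma_density b (s - x) * F s (x / s)) \<partial>lborel)
          = ennreal s * (\<integral>\<^sup>+t. ennreal (gamma_density a (s * t) * gamma_density b (s - s * t) * F s t)
                            \<partial>lborel)"
        using True by (subst nn_integral_real_affine[where c = s and t = 0]) auto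
      also have "\<dots> = (\<integral>\<^sup>+t. ennreal (s * gamma_density a (s * t) * gamma_density b (s - s * t) * F s t)
                         \<partial>lborel)"
        using True by (simp add: nn_integral_cmult[symmetric] ennreal_mult'[symmetric] mult.assoc)
      finally show ?thesis
        using True assms by (simp add: gamma_density_pair_factorization)
    next
      case False
      have vanish: "gamma_density a x * gamma_density b (s - x) = 0" for x
        using False by (cases "0 < x") (auto simp: gamma_density_def)
      show ?thesis
        using False by (simp add: vanish gamma_density_def[of "a + b"])
    qed
  qed
  finally show ?thesis .
qed

lemma logistic_map_half_interval_bounds:
  fixes t :: real
  assumes "0 < t" "t < 1/2"
  shows "0 < 4 * t * (1 - t)" "4 * t * (1 - t) < 1"
proof -
  have "0 < (1 - 2 * t)\<^sup>2"
    using assms by simp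
  also have "(1 - 2 * t)\<^sup>2 = 1 - 4 * t * (1 - t)"
    by (simp add: power2_eq_square algebra_simps)
  finally show "4 * t * (1 - t) < 1"
    by simp
  show "0 < 4 * t * (1 - t)"
    using assms by simp
qed

lemma image_logistic_map_half_interval: "(\<lambda>t. 4 * t * (1 - t)) ` {0<..<1/2} = {0<..<(1::real)}"
proof
  show "(\<lambda>t. 4 * t * (1 - t)) ` {0<..<1/2} \<subseteq> {0<..<(1::real)}"
    using logistic_map_half_interval_bounds by auto
  show "{0<..<1} \<subseteq> (\<lambda>t. 4 * t * (1 - t)) ` {0<..<(1/2::real)}"
  proof
    fix r :: real assume r: "r \<in> {0<..<1}"
    define s where "s = sqrt (1 - r)"
    define t where "t = (1 - s) / 2"
    have s: "0 < s" "s < 1"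
      using r by (auto simp: s_def)
    have "4 * t * (1 - t) = 1 - s\<^sup>2"
      unfolding t_def by (simp add: field_simps power2_eq_square)
    also have "\<dots> = r"
      using r by (simp add: s_def)
    finally have "r = 4 * t * (1 - t)" ..
    moreover have "t \<in> {0<..<1/2}"
      using s by (simp add: t_def)
    ultimately show "r \<in> (\<lambda>t. 4 * t * (1 - t)) ` {0<..<1/2}"
      by blast
  qed
qed

lemma Gamma_legendre_duplication_real:
  fixes a :: real
  assumes "0 < a"
  shows "Gamma a * Gamma (a + 1/2) = 2 powr (1 - 2 * a) * sqrt pi * Gamma (2 * a)"
proof -
  have a: "complex_of_real a \<notin> \<int>\<^sub>\<le>\<^sub>0"
    using assms by (auto simp: of_real_in_nonpos_Ints_iff)
  have "complex_of_real (a + 1/2) \<notin> \<int>\<^sub>\<le>\<^sub>0"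
    using assms by (auto simp: of_real_in_nonpos_Ints_iff simp del: of_real_add)
  then have a_half: "complex_of_real a + 1/2 \<notin> \<int>\<^sub>\<le>\<^sub>0"
    by simp
  have "Gamma (complex_of_real a) * Gamma (complex_of_real a + 1/2)
      = exp ((1 - 2 * complex_of_real a) * of_real (ln 2)) * of_real (sqrt pi)
        * Gamma (2 * complex_of_real a)"
    by (rule Gamma_legendre_duplication[OF a a_half])
  also have "exp ((1 - 2 * complex_of_real a) * of_real (ln 2)) = of_real (2 powr (1 - 2 * a))"
    by (simp add: powr_def flip: exp_of_real)
  finally have "complex_of_real (Gamma a * Gamma (a + 1/2))
      = complex_of_real (2 powr (1 - 2 * a) * sqrt pi * Gamma (2 * a))"
    by (simp flip: Gamma_complex_of_real)
  then show ?thesis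
    by (simp only: of_real_eq_iff)
qed

lemma beta_density_duplication:
  fixes a t :: real
  assumes "0 < a" "0 < t" "t < 1/2"
  shows "beta_density a (1/2) (4 * t * (1 - t)) * (4 - 8 * t) = 2 * beta_density a a t"
proof -
  have complement: "1 - 4 * t * (1 - t) = (1 - 2 * t)\<^sup>2"
    by (simp add: power2_eq_square algebra_simps)
  note r = logistic_map_half_interval_bounds[OF assms(2,3)]
  have "(1 - 4 * t * (1 - t)) powr (1/2 - 1) = inverse (sqrt ((1 - 2 * t)\<^sup>2))"
    unfolding complement by (simp add: powr_minus powr_half_sqrt[symmetric])
  then have sqrt_factor: "(1 - 4 * t * (1 - t)) powr (1/2 - 1) * (4 - 8 * t) = 4"
    using assms by (simp add: field_simps)
  have "Gamma (a + 1/2) * 4 powr a = 2 * sqrt pi * Gamma (2 * a) / Gamma a"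
  proof -
    have "(4::real) powr a = 2 powr (2 * a)"
      using powr_powr[of 2 2 a] by simp
    then show ?thesis
      using Gamma_legendre_duplication_real[OF assms(1)] Gamma_real_pos[OF assms(1)]
      by (simp add: field_simps powr_diff)
  qed
  then have scalar: "Gamma (a + 1/2) / (Gamma a * sqrt pi) * 4 powr (a - 1) * 4
      = 2 * (Gamma (2 * a) / (Gamma a * Gamma a))"
    using Gamma_real_pos[OF assms(1)] by (simp add: powr_diff field_simps)
  have "beta_density a (1/2) (4 * t * (1 - t)) * (4 - 8 * t)
      = Gamma (a + 1/2) / (Gamma a * sqrt pi) * (4 * t * (1 - t)) powr (a - 1)
        * ((1 - 4 * t * (1 - t)) powr (1/2 - 1) * (4 - 8 * t))"
    using r by (simp add: beta_density_def Gamma_one_half_real)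
  also have "\<dots> = Gamma (a + 1/2) / (Gamma a * sqrt pi) * 4 powr (a - 1) * 4
                     * (t powr (a - 1) * (1 - t) powr (a - 1))"
    unfolding sqrt_factor using assms by (simp add: powr_mult)
  also have "\<dots> = 2 * beta_density a a t"
    unfolding scalar using assms by (simp add: beta_density_def)
  finally show ?thesis .
qed

lemma nn_integral_beta_duplication:
  fixes a :: real and F :: "real \<Rightarrow> real"
  assumes "0 < a" and [measurable]: "F \<in> borel_measurable borel"
  shows "(\<integral>\<^sup>+t. ennreal (beta_density a a t * F (4 * t * (1 - t))) \<partial>lborel)
       = (\<integral>\<^sup>+r. ennreal (beta_density a (1/2) r * F r) \<partial>lborel)"
proof -
  have "(\<integral>\<^sup>+t. ennreal (beta_density a a t * F (4 * t * (1 - t))) \<partial>lborel)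
      = 2 * (\<integral>\<^sup>+t. ennreal (beta_density a a t * F (4 * t * (1 - t)) * indicator {..<1/2} t)
                \<partial>lborel)"
    by (rule nn_integral_reflection_symmetric[where c = 1, simplified])
       (auto simp: beta_density_def algebra_simps)
  also have "\<dots> = (\<integral>\<^sup>+t. ennreal (beta_density a (1/2) (4 * t * (1 - t)) * F (4 * t * (1 - t))
                       * (4 - 8 * t) * indicator {0<..<1/2} t) \<partial>lborel)"
  proof (subst nn_integral_cmult[symmetric], simp, rule nn_integral_cong)
    fix t :: real
    show "2 * ennreal (beta_density a a t * F (4 * t * (1 - t)) * indicator {..<1/2} t)
        = ennreal (beta_density a (1/2) (4 * t * (1 - t)) * F (4 * t * (1 - t)) * (4 - 8 * t)
                   * indicator {0<..<1/2} t)"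
    proof (cases "0 < t \<and> t < 1/2")
      case True
      have "2 * ennreal (beta_density a a t * F (4 * t * (1 - t)) * indicator {..<1/2} t)
          = ennreal (2 * beta_density a a t * F (4 * t * (1 - t)))"
        using True by (simp add: ennreal_mult' mult.assoc)
      also have "\<dots>
          = ennreal (beta_density a (1/2) (4 * t * (1 - t)) * (4 - 8 * t) * F (4 * t * (1 - t)))"
        using True by (simp only: beta_density_duplication[OF \<open>0 < a\<close>])
      finally show ?thesis
        using True by (simp add: mult_ac)
    next
      case False
      then show ?thesis
        by (auto simp: beta_density_def indicator_def)
    qed
  qed
  also have "\<dots> = (\<integral>\<^sup>+r. ennreal (beta_density a (1/2) r * F r
                       * indicator ((\<lambda>t. 4 * t * (1 - t)) ` {0<..<1/2}) r) \<partial>lborel)"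
    by (rule nn_integral_substitution_einterval[where a = "ereal 0" and b = "ereal (1/2)"
          and f = "\<lambda>r. beta_density a (1/2) r * F r" and g = "\<lambda>t. 4 * t * (1 - t)"
          and g' = "\<lambda>t. 4 - 8 * t", unfolded einterval_eq_Icc, symmetric])
       (auto intro!: derivative_eq_intros continuous_intros simp: algebra_simps)
  also have "\<dots> = (\<integral>\<^sup>+r. ennreal (beta_density a (1/2) r * F r) \<partial>lborel)"
    by (intro nn_integral_cong)
       (auto simp: image_logistic_map_half_interval beta_density_def indicator_def)
  finally show ?thesis .
qed

lemma sqrt_add_sqrt_eq:
  fixes x y :: real
  assumes "0 < x" "0 < y"
  shows "sqrt x + sqrt y = sqrt ((x + y) * (1 + sqrt (4 * (x / (x + y)) * (1 - x / (x + y)))))"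
proof -
  have "4 * (x / (x + y)) * (1 - x / (x + y)) = (2 * sqrt x * sqrt y / (x + y))\<^sup>2"
    using assms by (simp add: field_simps power2_eq_square)
  then have "sqrt (4 * (x / (x + y)) * (1 - x / (x + y))) = 2 * sqrt x * sqrt y / (x + y)"
    using assms by simp
  then have "(x + y) * (1 + sqrt (4 * (x / (x + y)) * (1 - x / (x + y)))) = (sqrt x + sqrt y)\<^sup>2"
    using assms by (simp add: field_simps power2_sum)
  then show ?thesis
    using assms by simp
qed

lemma nn_integral_sqrt_gamma_sum:
  fixes a :: real and G :: "real \<Rightarrow> real"
  assumes "0 < a" and [measurable]: "G \<in> borel_measurable borel"
  shows "(\<integral>\<^sup>+x. \<integral>\<^sup>+y. ennreal (gamma_density a x * gamma_density a y * G (sqrt x + sqrt y))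
            \<partial>lborel \<partial>lborel)
       = (\<integral>\<^sup>+s. \<integral>\<^sup>+r. ennreal (gamma_density (2 * a) s * beta_density a (1/2) r
                                * G (sqrt (s * (1 + sqrt r)))) \<partial>lborel \<partial>lborel)"
proof -
  define H where "H s t = G (sqrt (s * (1 + sqrt (4 * t * (1 - t)))))" for s t
  have [measurable]: "(\<lambda>(s, t). H s t) \<in> borel_measurable (borel \<Otimes>\<^sub>M borel)"
    unfolding H_def by measurable
  have pointwise: "gamma_density a x * gamma_density a y * G (sqrt x + sqrt y)
      = gamma_density a x * gamma_density a y * H (x + y) (x / (x + y))" for x y
    by (cases "0 < x \<and> 0 < y") (auto simp: gamma_density_def H_def sqrt_add_sqrt_eq)
  have "(\<integral>\<^sup>+x. \<integral>\<^sup>+y. ennreal (gamma_density a x * gamma_density a y * G (sqrt x + sqrt y))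
          \<partial>lborel \<partial>lborel)
      = (\<integral>\<^sup>+x. \<integral>\<^sup>+y. ennreal (gamma_density a x * gamma_density a y * H (x + y) (x / (x + y)))
          \<partial>lborel \<partial>lborel)"
    by (simp only: pointwise)
  also have "\<dots> = (\<integral>\<^sup>+s. \<integral>\<^sup>+t. ennreal (gamma_density (a + a) s * beta_density a a t * H s t)
                     \<partial>lborel \<partial>lborel)"
    by (rule nn_integral_gamma_pair_eq_gamma_beta) (use \<open>0 < a\<close> in auto)
  also have "\<dots> = (\<integral>\<^sup>+s. \<integral>\<^sup>+r. ennreal (gamma_density (2 * a) s * beta_density a (1/2) r
                                          * G (sqrt (s * (1 + sqrt r)))) \<partial>lborel \<partial>lborel)"
  proof (rule nn_integral_cong)
    fix s
    show "(\<integral>\<^sup>+t. ennreal (gamma_density (a + a) s * beta_density a a t * H s t) \<partial>lborel)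
        = (\<integral>\<^sup>+r. ennreal (gamma_density (2 * a) s * beta_density a (1/2) r
                             * G (sqrt (s * (1 + sqrt r)))) \<partial>lborel)"
      using nn_integral_beta_duplication[OF \<open>0 < a\<close>,
          of "\<lambda>r. gamma_density (2 * a) s * G (sqrt (s * (1 + sqrt r)))"]
      by (simp add: H_def mult_ac mult_2)
  qed
  finally show ?thesis .
qed

lemma emeasure_distr_indep_densities:
  fixes X Y :: "'a \<Rightarrow> real" and Px Py :: "real \<Rightarrow> real" and h :: "real \<Rightarrow> real \<Rightarrow> real"
  assumes "prob_space M"
    and X: "distributed M lborel X (\<lambda>x. ennreal (Px x))"
    and Y: "distributed M lborel Y (\<lambda>y. ennreal (Py y))"
    and indep: "prob_space.indep_var M borel X borel Y"
    and "\<And>x. 0 \<le> Px x" "\<And>y. 0 \<le> Py y"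
    and [measurable]: "(\<lambda>(x, y). h x y) \<in> borel_measurable (borel \<Otimes>\<^sub>M borel)" "A \<in> sets borel"
  shows "emeasure (distr M borel (\<lambda>\<omega>. h (X \<omega>) (Y \<omega>))) A
       = (\<integral>\<^sup>+x. \<integral>\<^sup>+y. ennreal (Px x * Py y * indicator A (h x y)) \<partial>lborel \<partial>lborel)"
proof -
  interpret prob_space M
    by fact
  have "indep_var lborel X lborel Y"
    using indep by (simp add: indep_var_def indep_vars_def bool.case_eq_if)
  then have joint: "distributed M (lborel \<Otimes>\<^sub>M lborel) (\<lambda>\<omega>. (X \<omega>, Y \<omega>))
      (\<lambda>(x, y). ennreal (Px x) * ennreal (Py y))"
    using X Y by (intro distributed_joint_indep) (auto intro: lborel.sigma_finite_measure_axioms)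
  have [measurable]: "X \<in> borel_measurable M" "Y \<in> borel_measurable M"
    "(\<lambda>x. ennreal (Px x)) \<in> borel_measurable borel"
    "(\<lambda>y. ennreal (Py y)) \<in> borel_measurable borel"
    using distributed_measurable[OF X] distributed_measurable[OF Y]
      distributed_borel_measurable[OF X] distributed_borel_measurable[OF Y] by simp_all
  let ?B = "(\<lambda>(x, y). h x y) -` A \<inter> space (lborel \<Otimes>\<^sub>M lborel)"
  have "emeasure (distr M borel (\<lambda>\<omega>. h (X \<omega>) (Y \<omega>))) A
      = emeasure M ((\<lambda>\<omega>. (X \<omega>, Y \<omega>)) -` ?B \<inter> space M)"
    by (subst emeasure_distr) (auto simp: space_pair_measure intro!: arg_cong2[where f = emeasure])
  also have "\<dots> = (\<integral>\<^sup>+z. (\<lambda>(x, y). ennreal (Px x) * ennreal (Py y)) z * indicator ?B z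
                     \<partial>(lborel \<Otimes>\<^sub>M lborel))"
    by (rule distributed_emeasure[OF joint]) measurable
  also have "\<dots> = (\<integral>\<^sup>+x. \<integral>\<^sup>+y. ennreal (Px x) * ennreal (Py y) * indicator A (h x y)
                     \<partial>lborel \<partial>lborel)"
    by (subst lborel.nn_integral_fst[symmetric]) (auto simp: space_pair_measure indicator_def)
  also have "\<dots> = (\<integral>\<^sup>+x. \<integral>\<^sup>+y. ennreal (Px x * Py y * indicator A (h x y)) \<partial>lborel \<partial>lborel)"
    using assms(5,6) by (simp add: ennreal_mult ennreal_indicator)
  finally show ?thesis .
qed

theorem proposition11:
  fixes a :: real
    and M :: "'a measure" and X1 X2 :: "'a \<Rightarrow> real"
    and N :: "'b measure" and G B :: "'b \<Rightarrow> real"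
  assumes "0 < a"
    and "prob_space M"
    and "distributed M lborel X1 (\<lambda>x. ennreal (gamma_density a x))"
    and "distributed M lborel X2 (\<lambda>x. ennreal (gamma_density a x))"
    and "prob_space.indep_var M borel X1 borel X2"
    and "prob_space N"
    and "distributed N lborel G (\<lambda>x. ennreal (gamma_density (2 * a) x))"
    and "distributed N lborel B (\<lambda>x. ennreal (beta_density a (1/2) x))"
    and "prob_space.indep_var N borel G borel B"
  shows "distr M borel (\<lambda>\<omega>. sqrt (X1 \<omega>) + sqrt (X2 \<omega>))
       = distr N borel (\<lambda>\<omega>. sqrt (G \<omega> * (1 + sqrt (B \<omega>))))"
proof (rule measure_eqI)
  fix A assume "A \<in> sets (distr M borel (\<lambda>\<omega>. sqrt (X1 \<omega>) + sqrt (X2 \<omega>)))"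
  then have [measurable]: "A \<in> sets borel"
    by simp
  have "emeasure (distr M borel (\<lambda>\<omega>. sqrt (X1 \<omega>) + sqrt (X2 \<omega>))) A
      = (\<integral>\<^sup>+x. \<integral>\<^sup>+y. ennreal (gamma_density a x * gamma_density a y * indicator A (sqrt x + sqrt y))
          \<partial>lborel \<partial>lborel)"
    using assms(1) by (intro emeasure_distr_indep_densities[OF assms(2-5)])
      (auto simp: gamma_density_nonneg)
  also have "\<dots> = (\<integral>\<^sup>+s. \<integral>\<^sup>+r. ennreal (gamma_density (2 * a) s * beta_density a (1/2) r
                     * indicator A (sqrt (s * (1 + sqrt r)))) \<partial>lborel \<partial>lborel)"
    using assms(1) by (intro nn_integral_sqrt_gamma_sum) auto
  also have "\<dots> = emeasure (distr N borel (\<lambda>\<omega>. sqrt (G \<omega> * (1 + sqrt (B \<omega>))))) A"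
    using assms(1) by (intro emeasure_distr_indep_densities[OF assms(6-9), symmetric])
      (auto simp: gamma_density_nonneg beta_density_nonneg)
  finally show "emeasure (distr M borel (\<lambda>\<omega>. sqrt (X1 \<omega>) + sqrt (X2 \<omega>))) A
      = emeasure (distr N borel (\<lambda>\<omega>. sqrt (G \<omega> * (1 + sqrt (B \<omega>))))) A" .
qed simp

end
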